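(* Let $G_1,\dots,G_K$ be a partition of $[n]$ with $n_k=|G_k|\ge1$, indexed so that $G_k$ consists of consecutive indices, and let $r\ge K$. Let $U^\ast\in\mathbb R^{n\times r}$ have $U^\ast_{is}=1/\sqrt{n_s}$ if $s\le K$ and $i\in G_s$, and $U^\ast_{is}=0$ otherwise, and let $Z^\ast=U^\ast{U^\ast}^T$. Then every $U\in\mathbb R^{n\times r}$ with $UU^T=Z^\ast$ and $U\ge0$ entrywise has, up to a permutation of its columns, the block form $$U=\begin{bmatrix} a_{1,1}\mathbf 1_{n_1},\dots,a_{1,m_1}\mathbf 1_{n_1} & 0&\cdots&0\\ 0& a_{2,1}\mathbf 1_{n_2},\dots,a_{2,m_2}\mathbf 1_{n_2}&\cdots&0\\ \vdots&\vdots&\ddots&\vdots\\ 0&0&\cdots& a_{K,1}\mathbf 1_{n_K},\dots,a_{K,m_K}\mathbf 1_{n_K}\end{bmatrix}$$ for some block sizes $m_k\ge1$ with $\sum_k m_k=r$ and weights $a_{k,\ell}\ge0$ with $\sum_{\ell}a_{k,\ell}^2=1/n_k$ for all $k\in[K]$.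
   Context: $\mathbf 1_{n_k}$ denotes the all-ones vector of length $n_k$; inequalities between matrices are entrywise. *)

theory Defs
  imports "HOL-Analysis.Analysis"
begin

text \<open>Indices are 0-based: rows i < n, columns s < r, clusters k < K.
  The partition into consecutive blocks is given by the sizes nk k (k < K);
  block k is the index interval starting at blk_off nk k of length nk k.\<close>

definition blk_off :: "(nat \<Rightarrow> nat) \<Rightarrow> nat \<Rightarrow> nat" where
  "blk_off nk k = (\<Sum>j<k. nk j)"

definition in_blk :: "(nat \<Rightarrow> nat) \<Rightarrow> nat \<Rightarrow> nat \<Rightarrow> bool" where
  "in_blk nk k i \<longleftrightarrow> blk_off nk k \<le> i \<and> i < blk_off nk k + nk k"

definition Ustar :: "nat \<Rightarrow> (nat \<Rightarrow> nat) \<Rightarrow> nat \<Rightarrow> nat \<Rightarrow> real" where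
  "Ustar K nk i s = (if s < K \<and> in_blk nk s i then 1 / sqrt (real (nk s)) else 0)"

definition Zstar :: "nat \<Rightarrow> nat \<Rightarrow> (nat \<Rightarrow> nat) \<Rightarrow> nat \<Rightarrow> nat \<Rightarrow> real" where
  "Zstar r K nk i j = (\<Sum>s<r. Ustar K nk i s * Ustar K nk j s)"

end

(* For rows u_i, u_j of U in the same block G_k the Gram conditions give
   |u_i|^2 = |u_j|^2 = <u_i, u_j> = 1/n_k, so |u_i - u_j|^2 = 0 and the rows coincide;
   for rows in different blocks <u_i, u_j> = 0, which for nonnegative vectors means
   disjoint supports. Hence every column of U is supported on a single block, and
   sorting the columns by that block yields the block form; m_k >= 1 because the
   common row of block k has squared norm 1/n_k > 0. *)

theory Submission
  imports Defs
begin

lemma blk_off_add_le: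
  assumes "k < k'" shows "blk_off nk k + nk k \<le> blk_off nk k'"
proof -
  have "blk_off nk k + nk k = (\<Sum>j<Suc k. nk j)" by (simp add: blk_off_def)
  also have "\<dots> \<le> (\<Sum>j<k'. nk j)" by (rule sum_mono2) (use assms in auto)
  finally show ?thesis by (simp add: blk_off_def)
qed

lemma in_blk_unique:
  assumes "in_blk nk k i" "in_blk nk k' i" shows "k = k'"
  using blk_off_add_le[of k k' nk] blk_off_add_le[of k' k nk] assms
  by (cases k k' rule: linorder_cases) (auto simp: in_blk_def)

lemma in_blk_exists: "i < blk_off nk K \<Longrightarrow> \<exists>k<K. in_blk nk k i"
proof (induction K)
  case 0 then show ?case by (simp add: blk_off_def)
next
  case (Suc K)
  show ?case
  proof (cases "i < blk_off nk K")
    case True then show ?thesis using Suc.IH less_Suc_eq by blast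
  next
    case False
    then have "in_blk nk K i" using Suc.prems by (simp add: in_blk_def blk_off_def)
    then show ?thesis by blast
  qed
qed

lemma in_blk_less_blk_off: "k < K \<Longrightarrow> in_blk nk k i \<Longrightarrow> i < blk_off nk K"
  using blk_off_add_le[of k K nk] by (simp add: in_blk_def)

lemma blk_off_add_less: "k < K \<Longrightarrow> l < nk k \<Longrightarrow> blk_off nk k + l < blk_off nk K"
  using blk_off_add_le[of k K nk] by simp

lemma in_blk_blk_off: "1 \<le> nk k \<Longrightarrow> in_blk nk k (blk_off nk k)"
  by (simp add: in_blk_def)

lemma Ustar_in_blk:
  assumes "k < K" "in_blk nk k i"
  shows "Ustar K nk i s = (if s = k then 1 / sqrt (real (nk k)) else 0)"
proof (cases "s = k")
  case False
  then have "\<not> in_blk nk s i" using assms(2) in_blk_unique by blast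
  then show ?thesis using False by (simp add: Ustar_def)
qed (use assms in \<open>simp add: Ustar_def\<close>)

lemma Zstar_in_blks:
  assumes "K \<le> r" "k < K" "k' < K" "in_blk nk k i" "in_blk nk k' j"
  shows "Zstar r K nk i j = (if k = k' then 1 / real (nk k) else 0)"
proof -
  have "Zstar r K nk i j = (\<Sum>s<r. if s = k then 1 / sqrt (real (nk k)) * Ustar K nk j k else 0)"
    unfolding Zstar_def Ustar_in_blk[OF assms(2,4)] by (rule sum.cong) auto
  also have "\<dots> = 1 / sqrt (real (nk k)) * Ustar K nk j k"
    using assms(1,2) by simp
  also have "\<dots> = (if k = k' then 1 / real (nk k) else 0)"
    unfolding Ustar_in_blk[OF assms(3,5)] by simp
  finally show ?thesis .
qed

lemma bij_betw_blk_off_Sigma: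
  "bij_betw (\<lambda>(k, l). blk_off m k + l) (SIGMA k:{..<K}. {..<m k}) {..<blk_off m K}"
proof -
  have inj: "inj_on (\<lambda>(k, l). blk_off m k + l) (SIGMA k:{..<K}. {..<m k})"
  proof (rule inj_onI, clarsimp)
    fix k l k' l' assume "blk_off m k + l = blk_off m k' + l'" "l < m k" "l' < m k'"
    moreover from this have "k = k'" by (intro in_blk_unique[of m k "blk_off m k + l"]) (auto simp: in_blk_def)
    ultimately show "k = k' \<and> l = l'" by simp
  qed
  have "(\<lambda>(k, l). blk_off m k + l) ` (SIGMA k:{..<K}. {..<m k}) = {..<blk_off m K}"
  proof (intro equalityI subsetI)
    fix p assume "p \<in> (\<lambda>(k, l). blk_off m k + l) ` (SIGMA k:{..<K}. {..<m k})"
    then show "p \<in> {..<blk_off m K}"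
      using blk_off_add_le[of _ K m] by fastforce
  next
    fix p assume "p \<in> {..<blk_off m K}"
    then obtain k where "k < K" "in_blk m k p" using in_blk_exists by blast
    then show "p \<in> (\<lambda>(k, l). blk_off m k + l) ` (SIGMA k:{..<K}. {..<m k})"
      by (intro rev_image_eqI[of "(k, p - blk_off m k)"]) (auto simp: in_blk_def)
  qed
  with inj show ?thesis by (simp add: bij_betw_def)
qed

lemma sum_card_fibres:
  fixes lab :: "nat \<Rightarrow> nat"
  assumes "\<forall>s<r. lab s < K"
  shows "(\<Sum>k<K. card {s. s < r \<and> lab s = k}) = r"
proof -
  have "(\<Sum>k<K. card {s. s < r \<and> lab s = k}) = card (\<Union>k<K. {s. s < r \<and> lab s = k})"
    by (rule card_UN_disjoint[symmetric]) auto
  also have "(\<Union>k<K. {s. s < r \<and> lab s = k}) = {..<r}" using assms by auto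
  finally show ?thesis by simp
qed

lemma permutation_grouping_fibres:
  fixes lab :: "nat \<Rightarrow> nat"
  assumes lab: "\<forall>s<r. lab s < K"
  defines "m \<equiv> \<lambda>k. card {s. s < r \<and> lab s = k}"
  shows "\<exists>\<sigma>. \<sigma> permutes {..<r} \<and>
           (\<forall>k<K. bij_betw (\<lambda>l. \<sigma> (blk_off m k + l)) {..<m k} {s. s < r \<and> lab s = k})"
proof -
  let ?T = "SIGMA k:{..<K}. {..<m k}"
  have "\<forall>k. \<exists>e. bij_betw e {..<m k} {s. s < r \<and> lab s = k}"
    using ex_bij_betw_nat_finite[of "{s. s < r \<and> lab s = k}" for k]
    unfolding m_def atLeast0LessThan by simp
  then obtain e where e: "\<And>k. bij_betw (e k) {..<m k} {s. s < r \<and> lab s = k}" by metis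
  have "bij_betw (\<lambda>(k, l). e k l) ({k} \<times> {..<m k}) {s. s < r \<and> lab s = k}" for k
  proof -
    have "(\<lambda>(k, l). e k l) ` ({k} \<times> {..<m k}) = e k ` {..<m k}" by force
    then show ?thesis using e[of k] by (auto simp: bij_betw_def inj_on_def)
  qed
  then have "bij_betw (\<lambda>(k, l). e k l) (\<Union>k<K. {k} \<times> {..<m k}) (\<Union>k<K. {s. s < r \<and> lab s = k})"
    by (intro bij_betw_UNION_disjoint) (auto simp: disjoint_family_on_def)
  moreover have "(\<Union>k<K. {s. s < r \<and> lab s = k}) = {..<r}" using lab by auto
  ultimately have e_bij: "bij_betw (\<lambda>(k, l). e k l) ?T {..<r}" by (simp add: Sigma_def)
  have off_bij: "bij_betw (\<lambda>(k, l). blk_off m k + l) ?T {..<r}"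
    using bij_betw_blk_off_Sigma[of m K] sum_card_fibres[OF lab]
    by (simp add: blk_off_def m_def)
  define g where "g = (\<lambda>(k, l). e k l) \<circ> inv_into ?T (\<lambda>(k, l). blk_off m k + l)"
  define \<sigma> where "\<sigma> p = (if p < r then g p else p)" for p
  have "bij_betw g {..<r} {..<r}"
    unfolding g_def by (rule bij_betw_trans[OF bij_betw_inv_into[OF off_bij] e_bij])
  then have "bij_betw \<sigma> {..<r} {..<r}"
    by (rule bij_betw_cong[THEN iffD1, rotated]) (simp add: \<sigma>_def)
  then have perm: "\<sigma> permutes {..<r}" by (rule bij_imp_permutes) (simp add: \<sigma>_def)
  have "\<sigma> (blk_off m k + l) = e k l" if "k < K" "l < m k" for k l
  proof -
    have kl: "(k, l) \<in> ?T" using that by simp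
    then have "blk_off m k + l < r" using off_bij by (auto dest: bij_betwE)
    moreover have "inv_into ?T (\<lambda>(k, l). blk_off m k + l) (blk_off m k + l) = (k, l)"
      using inv_into_f_f[OF bij_betw_imp_inj_on[OF off_bij] kl] by simp
    ultimately show ?thesis by (simp add: \<sigma>_def g_def)
  qed
  then have "bij_betw (\<lambda>l. \<sigma> (blk_off m k + l)) {..<m k} {s. s < r \<and> lab s = k}" if "k < K" for k
    using that e[of k] by (subst bij_betw_cong) auto
  with perm show ?thesis by blast
qed

lemma block_form_of_disjoint_row_supports:
  fixes V :: "nat \<Rightarrow> nat \<Rightarrow> 'a::semiring_1"
  assumes "1 \<le> K"
    and disj: "\<And>k k' s. k < K \<Longrightarrow> k' < K \<Longrightarrow> s < r \<Longrightarrow> V k s \<noteq> 0 \<Longrightarrow> V k' s \<noteq> 0 \<Longrightarrow> k = k'"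
    and nonzero: "\<And>k. k < K \<Longrightarrow> \<exists>s<r. V k s \<noteq> 0"
  shows "\<exists>\<sigma> m. \<sigma> permutes {..<r} \<and> (\<forall>k<K. 1 \<le> m k) \<and> (\<Sum>k<K. m k) = r \<and>
           (\<forall>k<K. \<forall>l<m k. \<forall>k'<K. k' \<noteq> k \<longrightarrow> V k' (\<sigma> (blk_off m k + l)) = 0) \<and>
           (\<forall>k<K. (\<Sum>l<m k. (V k (\<sigma> (blk_off m k + l)))\<^sup>2) = (\<Sum>s<r. (V k s)\<^sup>2))"
proof -
  \<comment> \<open>zero columns are assigned to block 0, hence the hypothesis \<open>1 \<le> K\<close>\<close>
  define lab where "lab s = (if \<exists>k<K. V k s \<noteq> 0 then SOME k. k < K \<and> V k s \<noteq> 0 else 0)" for s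
  have lab_some: "lab s < K \<and> V (lab s) s \<noteq> 0" if "\<exists>k<K. V k s \<noteq> 0" for s
    using someI_ex[OF that] that by (simp add: lab_def)
  have lab_less: "\<forall>s<r. lab s < K"
    using lab_some \<open>1 \<le> K\<close> by (simp add: lab_def)
  have lab_eq: "lab s = k" if "k < K" "s < r" "V k s \<noteq> 0" for k s
    using lab_some[of s] disj[of "lab s" k s] that by blast
  define m where "m k = card {s. s < r \<and> lab s = k}" for k
  obtain \<sigma> where perm: "\<sigma> permutes {..<r}"
    and fibre: "\<And>k. k < K \<Longrightarrow> bij_betw (\<lambda>l. \<sigma> (blk_off m k + l)) {..<m k} {s. s < r \<and> lab s = k}"
    using permutation_grouping_fibres[OF lab_less] unfolding m_def by blast
  have fibre_lab: "\<sigma> (blk_off m k + l) < r \<and> lab (\<sigma> (blk_off m k + l)) = k" if "k < K" "l < m k" for k l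
    using bij_betwE[OF fibre[OF that(1)]] that(2) by blast
  have "1 \<le> m k" if k: "k < K" for k
  proof -
    obtain s where "s < r" "V k s \<noteq> 0" using nonzero[OF k] by blast
    then have "s \<in> {s. s < r \<and> lab s = k}" using lab_eq[OF k] by blast
    then have "{s. s < r \<and> lab s = k} \<noteq> {}" by blast
    then show ?thesis unfolding m_def by (simp add: Suc_le_eq card_gt_0_iff)
  qed
  moreover have "(\<Sum>k<K. m k) = r" unfolding m_def by (rule sum_card_fibres[OF lab_less])
  moreover have "V k' (\<sigma> (blk_off m k + l)) = 0" if "k < K" "l < m k" "k' < K" "k' \<noteq> k" for k l k'
    using fibre_lab[OF that(1,2)] lab_eq[OF that(3)] that(4) by auto
  moreover have "(\<Sum>l<m k. (V k (\<sigma> (blk_off m k + l)))\<^sup>2) = (\<Sum>s<r. (V k s)\<^sup>2)" if "k < K" for k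
  proof -
    have "(\<Sum>l<m k. (V k (\<sigma> (blk_off m k + l)))\<^sup>2) = (\<Sum>s\<in>{s. s < r \<and> lab s = k}. (V k s)\<^sup>2)"
      by (rule sum.reindex_bij_betw[OF fibre[OF that]])
    also have "\<dots> = (\<Sum>s<r. (V k s)\<^sup>2)"
    proof (rule sum.mono_neutral_left)
      show "\<forall>s\<in>{..<r} - {s. s < r \<and> lab s = k}. (V k s)\<^sup>2 = 0"
        using lab_eq[OF that] by (metis (mono_tags) Diff_iff lessThan_iff mem_Collect_eq power_zero_numeral)
    qed auto
    finally show ?thesis .
  qed
  ultimately show ?thesis using perm by blast
qed

lemma eq_if_sum_products_eq:
  fixes f g :: "'a \<Rightarrow> real"
  assumes "finite A" "x \<in> A"
    and "(\<Sum>y\<in>A. f y * f y) = c" "(\<Sum>y\<in>A. g y * g y) = c" "(\<Sum>y\<in>A. f y * g y) = c"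
  shows "f x = g x"
proof -
  have "(\<Sum>y\<in>A. (f y - g y)\<^sup>2)
      = (\<Sum>y\<in>A. f y * f y) + (\<Sum>y\<in>A. g y * g y) - 2 * (\<Sum>y\<in>A. f y * g y)"
    by (simp add: power2_eq_square algebra_simps sum.distrib sum_subtractf sum_distrib_left)
  also have "\<dots> = 0" using assms(3-5) by simp
  finally have "(\<Sum>y\<in>A. (f y - g y)\<^sup>2) = 0" .
  then show ?thesis using assms(1,2) by (simp add: sum_nonneg_eq_0_iff)
qed

locale nonneg_Zstar_factor =
  fixes n r K :: nat and nk :: "nat \<Rightarrow> nat" and U :: "nat \<Rightarrow> nat \<Rightarrow> real"
  assumes nk_pos: "\<forall>k<K. 1 \<le> nk k"
    and n_eq: "n = (\<Sum>k<K. nk k)"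
    and K_le: "K \<le> r"
    and gram: "\<forall>i<n. \<forall>j<n. (\<Sum>s<r. U i s * U j s) = Zstar r K nk i j"
    and nonneg: "\<forall>i<n. \<forall>s<r. 0 \<le> U i s"
begin

lemma n_eq_blk_off: "n = blk_off nk K"
  using n_eq by (simp add: blk_off_def)

lemma less_n_iff_in_blk: "i < n \<longleftrightarrow> (\<exists>k<K. in_blk nk k i)"
  using in_blk_exists[of i nk K] in_blk_less_blk_off[of _ K nk i] unfolding n_eq_blk_off by blast

lemma gram_in_blks:
  assumes "k < K" "k' < K" "in_blk nk k i" "in_blk nk k' j"
  shows "(\<Sum>s<r. U i s * U j s) = (if k = k' then 1 / real (nk k) else 0)"
proof -
  have "i < n" "j < n" using less_n_iff_in_blk assms by blast+
  then show ?thesis using gram Zstar_in_blks[OF K_le assms] by simp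
qed

lemma in_blk_first: "k < K \<Longrightarrow> in_blk nk k (blk_off nk k)"
  using nk_pos in_blk_blk_off by blast

lemma first_row_less_n: "k < K \<Longrightarrow> blk_off nk k < n"
  using less_n_iff_in_blk in_blk_first by blast

lemma first_row_nonneg: "k < K \<Longrightarrow> s < r \<Longrightarrow> 0 \<le> U (blk_off nk k) s"
  using nonneg first_row_less_n by blast

lemma row_eq_first_row_of_blk:
  assumes "k < K" "in_blk nk k i" "s < r"
  shows "U i s = U (blk_off nk k) s"
  using gram_in_blks[OF assms(1,1)] assms in_blk_first[OF assms(1)]
  by (intro eq_if_sum_products_eq[of "{..<r}"]) auto

lemma first_rows_disjoint_supports:
  assumes "k < K" "k' < K" "s < r" "U (blk_off nk k) s \<noteq> 0" "U (blk_off nk k') s \<noteq> 0"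
  shows "k = k'"
proof (rule ccontr)
  assume "k \<noteq> k'"
  then have "(\<Sum>s<r. U (blk_off nk k) s * U (blk_off nk k') s) = 0"
    using gram_in_blks[OF assms(1,2) in_blk_first in_blk_first] assms(1,2) by simp
  moreover have "\<forall>s<r. 0 \<le> U (blk_off nk k) s * U (blk_off nk k') s"
    using first_row_nonneg assms(1,2) by simp
  ultimately have "U (blk_off nk k) s * U (blk_off nk k') s = 0"
    using assms(3) sum_nonneg_eq_0_iff[of "{..<r}" "\<lambda>s. U (blk_off nk k) s * U (blk_off nk k') s"]
    by simp
  with assms(4,5) show False by simp
qed

lemma first_row_norm:
  assumes "k < K" shows "(\<Sum>s<r. (U (blk_off nk k) s)\<^sup>2) = 1 / real (nk k)"
  using gram_in_blks[OF assms assms in_blk_first[OF assms] in_blk_first[OF assms]]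
  by (simp add: power2_eq_square)

lemma first_row_nonzero:
  assumes "k < K" shows "\<exists>s<r. U (blk_off nk k) s \<noteq> 0"
proof (rule ccontr)
  assume "\<not> (\<exists>s<r. U (blk_off nk k) s \<noteq> 0)"
  then have "(\<Sum>s<r. (U (blk_off nk k) s)\<^sup>2) = 0" by simp
  then show False using first_row_norm[OF assms] nk_pos[rule_format, OF assms] by simp
qed

lemma column_supported_on_blk:
  assumes "k < K" "s < r" "i < n" and off: "\<forall>k'<K. k' \<noteq> k \<longrightarrow> U (blk_off nk k') s = 0"
  shows "U i s = (if in_blk nk k i then U (blk_off nk k) s else 0)"
proof -
  obtain k' where k': "k' < K" "in_blk nk k' i" using less_n_iff_in_blk assms(3) by blast
  then have "U i s = U (blk_off nk k') s" using row_eq_first_row_of_blk assms(2) by blast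
  then show ?thesis using k' off in_blk_unique[of nk k i k'] by auto
qed

end

theorem theorem4:
  fixes n r K :: nat and nk :: "nat \<Rightarrow> nat" and U :: "nat \<Rightarrow> nat \<Rightarrow> real"
  assumes "1 \<le> K"
    and "\<forall>k<K. 1 \<le> nk k"
    and "n = (\<Sum>k<K. nk k)"
    and "K \<le> r"
    and "\<forall>i<n. \<forall>j<n. (\<Sum>s<r. U i s * U j s) = Zstar r K nk i j"
    and "\<forall>i<n. \<forall>s<r. 0 \<le> U i s"
  shows "\<exists>\<sigma> m a.
           \<sigma> permutes {..<r} \<and>
           (\<forall>k<K. 1 \<le> m k) \<and> (\<Sum>k<K. m k) = r \<and>
           (\<forall>k<K. \<forall>l<m k. 0 \<le> a k l) \<and>
           (\<forall>k<K. (\<Sum>l<m k. (a k l)\<^sup>2) = 1 / real (nk k)) \<and>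
           (\<forall>k<K. \<forall>l<m k. \<forall>i<n.
              U i (\<sigma> ((\<Sum>j<k. m j) + l)) = (if in_blk nk k i then a k l else 0))"
proof -
  interpret nonneg_Zstar_factor n r K nk U using assms(2-6) by unfold_locales
  obtain \<sigma> m where perm: "\<sigma> permutes {..<r}" and m_pos: "\<forall>k<K. 1 \<le> m k"
    and sum_m: "(\<Sum>k<K. m k) = r"
    and off_blk: "\<forall>k<K. \<forall>l<m k. \<forall>k'<K. k' \<noteq> k \<longrightarrow> U (blk_off nk k') (\<sigma> (blk_off m k + l)) = 0"
    and norm: "\<forall>k<K. (\<Sum>l<m k. (U (blk_off nk k) (\<sigma> (blk_off m k + l)))\<^sup>2)
                      = (\<Sum>s<r. (U (blk_off nk k) s)\<^sup>2)"
    using block_form_of_disjoint_row_supports[of K r "\<lambda>k s. U (blk_off nk k) s"]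
      assms(1) first_rows_disjoint_supports first_row_nonzero by blast
  have col_less: "\<sigma> (blk_off m k + l) < r" if "k < K" "l < m k" for k l
    using blk_off_add_less[of k K l m, OF that] sum_m permutes_in_image[OF perm] by (simp add: blk_off_def)
  define a where "a k l = U (blk_off nk k) (\<sigma> (blk_off m k + l))" for k l
  show ?thesis
  proof (intro exI conjI)
    show "\<forall>k<K. \<forall>l<m k. \<forall>i<n. U i (\<sigma> ((\<Sum>j<k. m j) + l)) = (if in_blk nk k i then a k l else 0)"
      using column_supported_on_blk col_less off_blk by (simp add: a_def blk_off_def)
  qed (use perm m_pos sum_m first_row_nonneg col_less norm first_row_norm in \<open>auto simp: a_def\<close>)
qed

end
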